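(* Assume $1-1/\gamma<\beta<1$, let $\chi=\frac{1-\gamma(1-\beta)}{\beta}$ and $\epsilon\in(0,1)$. Define $$B_{N,\epsilon}=\Big\{\sum_{k=1}^N w_{I^N_k}\mathbf 1\{I^N_k>N^{\chi+\epsilon}\}<N^{-\epsilon\beta/2}\Big\}.$$ Then $\lim_{N\to\infty}\log(N)\,\mathbb P(B_{N,\epsilon}^c)=0$.
   Context: Fix $\gamma>1$, $\beta\in(0,1)$. $\Xi$ is a Poisson point process on $(0,\infty)$ with intensity $x^{-2}dx$ and atoms $w_1>w_2>\cdots$. Conditionally on $\Xi$, $I^N=(I^N_1,\dots,I^N_N)$ are $N$ indices sampled without replacement from $\{1,\dots,\lceil N^\gamma\rceil\}$ with weights $w_i^\beta$ (each successive draw picks a not-yet-drawn index $i$ with probability proportional to $w_i^\beta$ among the not-yet-drawn ones). *)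

theory Defs
  imports "HOL-Probability.Probability"
begin

definition ppp_intensity :: "real set \<Rightarrow> ennreal" where
  "ppp_intensity A = (\<integral>\<^sup>+ x. ennreal (1 / x\<^sup>2) * indicator A x \<partial>lborel)"

definition atom_count :: "(nat \<Rightarrow> real) \<Rightarrow> real set \<Rightarrow> nat" where
  "atom_count a A = card {i. 1 \<le> i \<and> a i \<in> A}"

text \<open>w : the atoms w_1 > w_2 > ... (index 0 unused) of a Poisson point process on (0,oo)
  with intensity x^(-2) dx, defined on the probability space M: for pairwise disjoint Borel
  sets A_0,...,A_{k-1} in (0,oo) of finite intensity, the counts are a.s. finite, independent,
  and Poisson distributed with mean the intensity.\<close>
definition is_ppp_atoms :: "'a measure \<Rightarrow> ('a \<Rightarrow> nat \<Rightarrow> real) \<Rightarrow> bool" where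
  "is_ppp_atoms M w \<longleftrightarrow>
     prob_space M \<and>
     (\<forall>i. (\<lambda>\<omega>. w \<omega> i) \<in> borel_measurable M) \<and>
     (\<forall>\<omega>\<in>space M. \<forall>i\<ge>1. 0 < w \<omega> i \<and> w \<omega> (Suc i) < w \<omega> i) \<and>
     (\<forall>(k::nat) (A::nat \<Rightarrow> real set).
        (\<forall>j<k. A j \<in> sets borel \<and> A j \<subseteq> {0<..} \<and> ppp_intensity (A j) < \<infinity>) \<and>
        disjoint_family_on A {..<k} \<longrightarrow>
          (\<forall>j<k. AE \<omega> in M. finite {i. 1 \<le> i \<and> w \<omega> i \<in> A j}) \<and>
          prob_space.indep_vars M (\<lambda>_. count_space UNIV)
             (\<lambda>j \<omega>. atom_count (w \<omega>) (A j)) {..<k} \<and>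
          (\<forall>j<k. \<forall>n::nat.
             measure M {\<omega> \<in> space M. atom_count (w \<omega>) (A j) = n} =
               (let \<mu> = enn2real (ppp_intensity (A j)) in \<mu> ^ n / fact n * exp (- \<mu>))))"

definition weighted_pmf :: "(nat \<Rightarrow> real) \<Rightarrow> nat set \<Rightarrow> nat pmf" where
  "weighted_pmf f A = embed_pmf (\<lambda>i. if i \<in> A then f i / (\<Sum>j\<in>A. f j) else 0)"

fun sample_wor :: "(nat \<Rightarrow> real) \<Rightarrow> nat set \<Rightarrow> nat \<Rightarrow> nat list pmf" where
  "sample_wor f A 0 = return_pmf []"
| "sample_wor f A (Suc n) =
     bind_pmf (weighted_pmf f A) (\<lambda>i. map_pmf (\<lambda>is. i # is) (sample_wor f (A - {i}) n))"

definition B_event :: "real \<Rightarrow> real \<Rightarrow> real \<Rightarrow> nat \<Rightarrow> (nat \<Rightarrow> real) \<Rightarrow> nat list \<Rightarrow> bool" where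
  "B_event \<beta> chi \<epsilon> N a I \<longleftrightarrow>
     (\<Sum>k<N. a (I ! k) * (if real (I ! k) > real N powr (chi + \<epsilon>) then 1 else 0))
       < real N powr (- \<epsilon> * \<beta> / 2)"

end

theory Submission
  imports Defs "HOL-Real_Asymp.Real_Asymp"
begin

text \<open>
  Fix the weights. Off the event \<open>B\<close>, the sampled indices above \<open>K = N^(\<chi>+\<epsilon>)\<close> carry total
  weight at least \<open>N^(-\<epsilon>\<beta>/2)\<close>. If every draw is made from a pool of remaining
  \<open>w^\<beta>\<close>-mass at least \<open>R\<close>, the expected total weight of these indices is at most
  \<open>N \<Sum>\<^sub>i\<^sub>>\<^sub>K w\<^sub>i^(1+\<beta>) / R\<close>, and Markov's inequality applies.
  With \<open>n = \<lceil>N^\<gamma>\<rceil>\<close>, suppose \<open>w\<^sub>n\<^sub>/\<^sub>4 \<ge> 2/n\<close> and \<open>w(2^k) < 2/2^k\<close> at the dyadic indices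
  between \<open>K\<close> and \<open>n\<close>. Then removing \<open>N \<ll> n\<close> indices leaves \<open>R \<ge> c n^(1-\<beta>)\<close>, and
  \<open>w\<^sub>i < 4/i\<close> for \<open>K < i \<le> n\<close>; by the choice of \<open>\<chi>\<close> the probability is then
  \<open>O(N^(-\<epsilon>\<beta>/2))\<close>. The number of atoms above a level \<open>x\<close> is Poisson with mean \<open>1/x\<close>, so by
  Chebyshev's inequality the assumption on the weights fails with probability \<open>O(1/n + 1/K)\<close>.
  All bounds decay polynomially in \<open>N\<close> and hence beat the factor \<open>log N\<close>.
\<close>

section \<open>Sampling without replacement\<close>

lemma pmf_weighted_pmf:
  assumes "finite A" "\<And>i. i \<in> A \<Longrightarrow> 0 \<le> f i" "0 < sum f A"
  shows "pmf (weighted_pmf f A) i = (if i \<in> A then f i / sum f A else 0)"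
  unfolding weighted_pmf_def
proof (rule pmf_embed_pmf)
  show "0 \<le> (if i \<in> A then f i / sum f A else 0)" for i
    using assms by auto
  have "(\<integral>\<^sup>+ i. ennreal (if i \<in> A then f i / sum f A else 0) \<partial>count_space UNIV)
      = (\<Sum>i\<in>A. ennreal (f i / sum f A))"
    by (subst nn_integral_count_space') (use assms in auto)
  also have "\<dots> = ennreal (\<Sum>i\<in>A. f i / sum f A)"
    using assms by (intro sum_ennreal) auto
  finally show "(\<integral>\<^sup>+ i. ennreal (if i \<in> A then f i / sum f A else 0) \<partial>count_space UNIV) = 1"
    using assms by (simp add: sum_divide_distrib[symmetric])
qed

lemma nn_integral_weighted_pmf:
  assumes "finite A" "\<And>i. i \<in> A \<Longrightarrow> 0 \<le> f i" "0 < sum f A" "\<And>i. 0 \<le> g i"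
  shows "(\<integral>\<^sup>+ i. ennreal (g i) \<partial>weighted_pmf f A) = ennreal ((\<Sum>i\<in>A. g i * f i) / sum f A)"
proof -
  have "(\<integral>\<^sup>+ i. ennreal (g i) \<partial>weighted_pmf f A)
      = (\<Sum>i\<in>A. ennreal (pmf (weighted_pmf f A) i) * ennreal (g i))"
    unfolding nn_integral_measure_pmf
    by (subst nn_integral_count_space') (use assms in \<open>auto simp: pmf_weighted_pmf\<close>)
  also have "\<dots> = (\<Sum>i\<in>A. ennreal (g i * f i / sum f A))"
    using assms by (intro sum.cong) (auto simp: pmf_weighted_pmf ennreal_mult'[symmetric] mult.commute)
  also have "\<dots> = ennreal ((\<Sum>i\<in>A. g i * f i) / sum f A)"
    using assms by (subst sum_ennreal) (auto simp: sum_divide_distrib)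
  finally show ?thesis .
qed

lemma length_sample_wor: "I \<in> set_pmf (sample_wor f A n) \<Longrightarrow> length I = n"
  by (induction n arbitrary: A I) auto

lemma card_le_card_Diff1_Suc:
  assumes "finite A"
  shows "card A \<le> Suc (card (A - {x}))"
  using assms by (cases "x \<in> A") (auto simp: card_Suc_Diff1)

lemma nn_integral_sample_wor_Suc_sum_list:
  assumes "\<And>i. 0 \<le> g i"
  shows "(\<integral>\<^sup>+ I. ennreal (sum_list (map g I)) \<partial>sample_wor f A (Suc n))
    = (\<integral>\<^sup>+ i. ennreal (g i)
         + (\<integral>\<^sup>+ I. ennreal (sum_list (map g I)) \<partial>sample_wor f (A - {i}) n) \<partial>weighted_pmf f A)"
proof -
  have "(\<integral>\<^sup>+ I. ennreal (g i + sum_list (map g I)) \<partial>sample_wor f (A - {i}) n)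
      = (\<integral>\<^sup>+ I. ennreal (g i) + ennreal (sum_list (map g I)) \<partial>sample_wor f (A - {i}) n)" for i
    using assms sum_list_nonneg[of "map g _"] by (intro nn_integral_cong ennreal_plus) auto
  then show ?thesis
    by (simp add: nn_integral_add measure_pmf.emeasure_space_1)
qed

text \<open>The hypothesis on \<open>R\<close> says that every draw is made from a set of \<open>f\<close>-mass at least \<open>R\<close>,
  so each draw contributes at most \<open>(\<Sum>i\<in>A. g i * f i) / R\<close> in expectation.\<close>
lemma nn_integral_sample_wor_sum_list_le:
  fixes f g :: "nat \<Rightarrow> real"
  assumes "finite A" "\<And>i. i \<in> A \<Longrightarrow> 0 \<le> f i" "\<And>i. 0 \<le> g i" "0 < R"
    and "\<And>B. B \<subseteq> A \<Longrightarrow> card A \<le> card B + n \<Longrightarrow> R \<le> sum f B"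
  shows "(\<integral>\<^sup>+ I. ennreal (sum_list (map g I)) \<partial>sample_wor f A n)
           \<le> ennreal (real n * (\<Sum>i\<in>A. g i * f i) / R)"
  using assms
proof (induction n arbitrary: A)
  case 0
  then show ?case by simp
next
  case (Suc n)
  define S where "S A = (\<Sum>i\<in>A. g i * f i)" for A
  have S_nonneg: "0 \<le> S A" using Suc.prems by (auto simp: S_def intro: sum_nonneg)
  have R_le: "R \<le> sum f A" using Suc.prems(5)[of A] by simp
  then have sum_pos: "0 < sum f A" using Suc.prems(4) by linarith
  have IH: "(\<integral>\<^sup>+ I. ennreal (sum_list (map g I)) \<partial>sample_wor f (A - {i}) n)
              \<le> ennreal (real n * S A / R)" for i
  proof -
    have "(\<integral>\<^sup>+ I. ennreal (sum_list (map g I)) \<partial>sample_wor f (A - {i}) n)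
            \<le> ennreal (real n * S (A - {i}) / R)"
      unfolding S_def
    proof (rule Suc.IH)
      fix B assume "B \<subseteq> A - {i}" "card (A - {i}) \<le> card B + n"
      then show "R \<le> sum f B"
        using Suc.prems(1) Suc.prems(5)[of B] card_le_card_Diff1_Suc[of A i] by force
    qed (use Suc.prems in auto)
    also have "S (A - {i}) \<le> S A"
      unfolding S_def using Suc.prems by (intro sum_mono2) auto
    then have "ennreal (real n * S (A - {i}) / R) \<le> ennreal (real n * S A / R)"
      using Suc.prems(4) by (intro ennreal_leI divide_right_mono mult_left_mono) auto
    finally show ?thesis .
  qed
  have "(\<integral>\<^sup>+ I. ennreal (sum_list (map g I)) \<partial>sample_wor f A (Suc n))
      \<le> (\<integral>\<^sup>+ i. ennreal (g i) + ennreal (real n * S A / R) \<partial>weighted_pmf f A)"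
    unfolding nn_integral_sample_wor_Suc_sum_list[OF Suc.prems(3)]
    by (intro nn_integral_mono add_left_mono IH)
  also have "\<dots> = ennreal (S A / sum f A) + ennreal (real n * S A / R)"
    using Suc.prems sum_pos
    by (simp add: nn_integral_add nn_integral_weighted_pmf measure_pmf.emeasure_space_1 S_def)
  also have "\<dots> \<le> ennreal (real (Suc n) * S A / R)"
  proof -
    have "S A / sum f A \<le> S A / R"
      using S_nonneg R_le Suc.prems(4) by (intro divide_left_mono) auto
    then show ?thesis
      using S_nonneg R_le Suc.prems(4)
      by (subst ennreal_plus[symmetric]) (auto intro!: ennreal_leI simp: field_simps)
  qed
  finally show ?case by (simp add: S_def)
qed

lemma prob_sample_wor_sum_list_ge_le:
  fixes f g :: "nat \<Rightarrow> real"
  assumes "finite A" "\<And>i. i \<in> A \<Longrightarrow> 0 \<le> f i" "\<And>i. 0 \<le> g i" "0 < R"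
    and "\<And>B. B \<subseteq> A \<Longrightarrow> card A \<le> card B + n \<Longrightarrow> R \<le> sum f B"
    and "0 < c"
  shows "measure_pmf.prob (sample_wor f A n) {I. c \<le> sum_list (map g I)}
           \<le> real n * (\<Sum>i\<in>A. g i * f i) / R / c"
proof -
  let ?p = "sample_wor f A n" and ?E = "real n * (\<Sum>i\<in>A. g i * f i) / R"
  have E_nonneg: "0 \<le> ?E"
    using assms by (intro divide_nonneg_nonneg mult_nonneg_nonneg sum_nonneg) auto
  have sum_list_g_nonneg: "0 \<le> sum_list (map g I)" for I
    by (rule sum_list_nonneg) (use assms(3) in auto)
  have "c \<le> x \<longleftrightarrow> 1 \<le> ennreal (1 / c) * ennreal x" if "0 \<le> x" for x
    using that \<open>0 < c\<close> by (simp add: ennreal_mult'[symmetric] ennreal_1[symmetric] del: ennreal_1)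
  then have "{I. c \<le> sum_list (map g I)}
      = {I \<in> UNIV. 1 \<le> ennreal (1 / c) * ennreal (sum_list (map g I))}"
    using sum_list_g_nonneg by blast
  moreover have "emeasure ?p {I \<in> UNIV. 1 \<le> ennreal (1 / c) * ennreal (sum_list (map g I))}
      \<le> ennreal (1 / c) * (\<integral>\<^sup>+ I. ennreal (sum_list (map g I)) * indicator UNIV I \<partial>?p)"
    by (rule nn_integral_Markov_inequality) auto
  ultimately have "emeasure ?p {I. c \<le> sum_list (map g I)}
      \<le> ennreal (1 / c) * (\<integral>\<^sup>+ I. ennreal (sum_list (map g I)) \<partial>?p)"
    by simp
  also have "\<dots> \<le> ennreal (1 / c) * ennreal ?E"
    using nn_integral_sample_wor_sum_list_le[OF assms(1-5)] by (intro mult_left_mono) auto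
  also have "\<dots> = ennreal (?E / c)"
    using \<open>0 < c\<close> E_nonneg by (simp add: ennreal_mult'[symmetric] mult.commute)
  finally show ?thesis
    using divide_nonneg_pos[OF E_nonneg \<open>0 < c\<close>]
    by (simp add: measure_pmf.emeasure_eq_measure ennreal_le_iff del: times_divide_eq_left divide_divide_eq_left)
qed

lemma powr_Suc_le_diff_powr:
  fixes \<beta> :: real and b :: nat
  assumes "0 < \<beta>" "1 \<le> b"
  shows "real (Suc b) powr (-(1 + \<beta>)) \<le> (real b powr (-\<beta>) - real (Suc b) powr (-\<beta>)) / \<beta>"
proof -
  obtain z where z: "real b < z" "z < real (Suc b)"
    and mvt: "real (Suc b) powr (-\<beta>) - real b powr (-\<beta>) = -\<beta> * z powr (-\<beta> - 1)"
  proof -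
    have "\<exists>z. real b < z \<and> z < real (Suc b) \<and>
        real (Suc b) powr (-\<beta>) - real b powr (-\<beta>) = (real (Suc b) - real b) * (-\<beta> * z powr (-\<beta> - 1))"
    proof (rule MVT2)
      fix x assume "real b \<le> x" "x \<le> real (Suc b)"
      then show "((\<lambda>x. x powr (-\<beta>)) has_real_derivative -\<beta> * x powr (-\<beta> - 1)) (at x)"
        using assms has_real_derivative_powr[of x "-\<beta>"] by simp
    qed simp
    then show ?thesis using that by auto
  qed
  have "real (Suc b) powr (-(1 + \<beta>)) \<le> z powr (-(1 + \<beta>))"
    using assms z by (intro powr_mono2') auto
  then have "\<beta> * real (Suc b) powr (-(1 + \<beta>)) \<le> \<beta> * z powr (-(1 + \<beta>))"
    using assms by (intro mult_left_mono) auto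
  moreover have "-\<beta> - 1 = -(1 + \<beta>)" by simp
  ultimately have "\<beta> * real (Suc b) powr (-(1 + \<beta>)) \<le> real b powr (-\<beta>) - real (Suc b) powr (-\<beta>)"
    using mvt by (metis add.inverse_inverse le_diff_eq minus_diff_eq mult_minus_left diff_0)
  then show ?thesis using assms by (simp add: field_simps)
qed

lemma sum_powr_tail_le:
  fixes \<beta> :: real and a b :: nat
  assumes "0 < \<beta>" "1 \<le> a"
  shows "(\<Sum>i\<in>{a<..b}. real i powr (-(1 + \<beta>))) \<le> real a powr (-\<beta>) / \<beta>"
proof (cases "a \<le> b")
  case True
  then have "(\<Sum>i\<in>{a<..b}. real i powr (-(1 + \<beta>))) \<le> (real a powr (-\<beta>) - real b powr (-\<beta>)) / \<beta>"
  proof (induction b rule: dec_induct)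
    case (step b)
    have "{a<..Suc b} = insert (Suc b) {a<..b}" using step by auto
    then show ?case
      using step powr_Suc_le_diff_powr[OF assms(1), of b] assms(2)
      by (simp add: diff_divide_distrib)
  qed simp
  also have "\<dots> \<le> real a powr (-\<beta>) / \<beta>"
    using assms by (intro divide_right_mono) auto
  finally show ?thesis .
qed (use assms in simp)

lemma sum_dyadic_le:
  fixes K :: real and D :: "nat set"
  assumes "finite D" "0 < K" "\<And>k. k \<in> D \<Longrightarrow> K < 2^(k+1)"
  shows "(\<Sum>k\<in>D. 2 / 2^k) \<le> 8 / K"
proof (cases "D = {}")
  case False
  define k0 where "k0 = Min D"
  have k0: "k0 \<in> D" "\<And>k. k \<in> D \<Longrightarrow> k0 \<le> k"
    using False assms(1) by (auto simp: k0_def)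
  have geometric: "(\<Sum>k\<in>D. (1/2::real)^(k - k0)) \<le> 2"
  proof -
    have "(\<Sum>k\<in>D. (1/2::real)^(k - k0)) = (\<Sum>j\<in>(\<lambda>k. k - k0) ` D. (1/2::real)^j)"
      using k0(2) by (subst sum.reindex) (auto intro!: inj_on_diff_nat)
    also have "\<dots> \<le> (\<Sum>j. (1/2::real)^j)"
      using assms(1) by (intro sum_le_suminf) auto
    finally show ?thesis by (simp add: suminf_geometric)
  qed
  have "(\<Sum>k\<in>D. 2 / 2^k) = 2 / 2^k0 * (\<Sum>k\<in>D. (1/2::real)^(k - k0))"
    unfolding sum_distrib_left
    by (intro sum.cong) (auto simp: k0(2) power_diff power_divide field_simps)
  also have "\<dots> \<le> 2 / 2^k0 * 2"
    using geometric by (intro mult_left_mono) auto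
  also have "\<dots> = 8 / 2^(k0+1)"
    by simp
  also have "\<dots> \<le> 8 / K"
    using assms(2) assms(3)[OF k0(1)] by (intro divide_left_mono) auto
  finally show ?thesis .
qed (use assms in simp)

lemma dyadic_decay:
  fixes v :: "nat \<Rightarrow> real"
  assumes antimono: "\<And>i j. 1 \<le> i \<Longrightarrow> i \<le> j \<Longrightarrow> v j \<le> v i"
    and dyadic: "\<And>k. 2^k \<le> n \<Longrightarrow> K < 2^(k+1) \<Longrightarrow> v (2^k) < 2 / 2^k"
    and i: "1 \<le> i" "i \<le> n" "K < real i"
  shows "v i < 4 / real i"
proof -
  obtain k where k: "2^k \<le> i" "i < 2^(k+1)"
    using ex_power_ivl1[of 2 i] i(1) by auto
  have i_lt: "real i < 2 * 2^k"
    using k(2) by (metis of_nat_less_iff of_nat_numeral of_nat_power power_Suc Suc_eq_plus1)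
  have "v i \<le> v (2^k)"
    using antimono k(1) by simp
  also have "v (2^k) < 2 / 2^k"
    using dyadic k(1) i i_lt by (intro dyadic) auto
  also have "(2::real) / 2^k \<le> 4 / real i"
    using i(1) i_lt by (simp add: field_simps)
  finally show ?thesis .
qed

lemma mult_card_le_sum_of_large_subset:
  fixes f :: "nat \<Rightarrow> real"
  assumes "finite A" "C \<subseteq> A" "B \<subseteq> A" "card A \<le> card B + N"
    and "\<And>i. i \<in> A \<Longrightarrow> 0 \<le> f i" "0 \<le> y" "\<And>i. i \<in> C \<Longrightarrow> y \<le> f i"
  shows "real (card C - N) * y \<le> sum f B"
proof -
  have fin: "finite B" "finite C" using assms(1-3) finite_subset by auto
  have "card (C - B) \<le> card (A - B)"
    using assms(1,2) by (intro card_mono) auto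
  also have "\<dots> = card A - card B"
    using assms(1,3) fin by (simp add: card_Diff_subset)
  finally have "card C - N \<le> card (C \<inter> B)"
    using assms(4) card_Int_Diff[OF fin(2), of B] by linarith
  then have "real (card C - N) * y \<le> real (card (C \<inter> B)) * y"
    using assms(6) by (intro mult_right_mono) auto
  also have "\<dots> \<le> sum f (C \<inter> B)"
    using assms(7) sum_mono[of "C \<inter> B" "\<lambda>_. y" f] by simp
  also have "\<dots> \<le> sum f B"
    using assms(3,5) fin by (intro sum_mono2) auto
  finally show ?thesis .
qed

lemma sum_tail_powr_le:
  fixes v :: "nat \<Rightarrow> real"
  assumes "0 < \<beta>" "2 \<le> K"
    and decay: "\<And>i. K < real i \<Longrightarrow> i \<le> n \<Longrightarrow> 0 < v i \<and> v i < 4 / real i"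
  shows "(\<Sum>i=1..n. if K < real i then v i powr (1 + \<beta>) else 0)
           \<le> 2 powr \<beta> * 4 powr (1 + \<beta>) * K powr (-\<beta>) / \<beta>"
proof -
  define a where "a = nat \<lfloor>K\<rfloor>"
  have a: "1 \<le> a" "real a \<le> K" "K / 2 \<le> real a"
    using assms(2) by (auto simp: a_def le_nat_iff) linarith
  have "(\<Sum>i=1..n. if K < real i then v i powr (1 + \<beta>) else 0)
      \<le> (\<Sum>i=1..n. if a < i then 4 powr (1 + \<beta>) * real i powr (-(1 + \<beta>)) else 0)"
  proof (rule sum_mono)
    fix i assume "i \<in> {1..n}"
    show "(if K < real i then v i powr (1 + \<beta>) else 0)
        \<le> (if a < i then 4 powr (1 + \<beta>) * real i powr (-(1 + \<beta>)) else 0)"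
    proof (cases "K < real i")
      case True
      then have "v i powr (1 + \<beta>) \<le> (4 / real i) powr (1 + \<beta>)"
        using decay[of i] \<open>i \<in> {1..n}\<close> assms(1) by (intro powr_mono2) auto
      also have "\<dots> = 4 powr (1 + \<beta>) * real i powr (-(1 + \<beta>))"
        unfolding powr_divide powr_minus by (simp add: divide_inverse)
      finally show ?thesis using True a(2) by simp
    qed simp
  qed
  also have "\<dots> = 4 powr (1 + \<beta>) * (\<Sum>i\<in>{a<..n}. real i powr (-(1 + \<beta>)))"
    using a(1) by (simp add: sum.If_cases sum_distrib_left) (intro sum.cong; auto)
  also have "\<dots> \<le> 4 powr (1 + \<beta>) * (real a powr (-\<beta>) / \<beta>)"
    using assms(1) a(1) by (intro mult_left_mono sum_powr_tail_le) auto
  also have "\<dots> \<le> 4 powr (1 + \<beta>) * ((K / 2) powr (-\<beta>) / \<beta>)"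
    using assms a by (intro mult_left_mono divide_right_mono powr_mono2') auto
  also have "(K / 2) powr (-\<beta>) = 2 powr \<beta> * K powr (-\<beta>)"
    unfolding powr_divide powr_minus by (simp add: divide_inverse)
  finally show ?thesis by (simp add: mult_ac)
qed

lemma sum_powr_ge_after_removal:
  fixes v :: "nat \<Rightarrow> real" and N n :: nat and \<beta> :: real
  assumes antimono: "\<And>i j. 1 \<le> i \<Longrightarrow> i \<le> j \<Longrightarrow> v j \<le> v i"
    and "2 / real n \<le> v (n div 4)" "0 < \<beta>" "8 * N + 6 \<le> n"
    and "B \<subseteq> {1..n}" "card {1..n} \<le> card B + N"
  shows "2 powr \<beta> * real n powr (1 - \<beta>) / 8 \<le> (\<Sum>i\<in>B. v i powr \<beta>)"
proof -
  define m where "m = n div 4"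
  have n_pos: "0 < real n" using assms(4) by simp
  have "2 powr \<beta> * real n powr (1 - \<beta>) / 8 = real n / 8 * (2 / real n) powr \<beta>"
    unfolding powr_divide powr_diff using n_pos by (simp add: mult.commute)
  also have "\<dots> \<le> real (card {1..m} - N) * (2 / real n) powr \<beta>"
    using assms(4) by (auto simp: m_def intro!: mult_right_mono)
  also have "\<dots> \<le> (\<Sum>i\<in>B. v i powr \<beta>)"
  proof (rule mult_card_le_sum_of_large_subset[OF _ _ assms(5,6)])
    fix j assume "j \<in> {1..m}"
    then have "2 / real n \<le> v j"
      using assms(2) antimono[of j m] by (auto simp: m_def)
    then show "(2 / real n) powr \<beta> \<le> v j powr \<beta>"
      using n_pos assms(3) by (intro powr_mono2) auto
  qed (auto simp: m_def)
  finally show ?thesis .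
qed

lemma tendsto_ln_mult_sum_powr:
  fixes a b d C D E :: real
  assumes "0 < a" "0 < b" "0 < d"
  shows "((\<lambda>N. ln (real N) * (C / real N powr a + D / real N powr b + E / real N powr d))
           \<longlongrightarrow> 0) sequentially"
proof -
  have ln_powr: "((\<lambda>N. ln (real N) / real N powr e) \<longlongrightarrow> 0) sequentially" if "0 < e" for e
    using that by real_asymp
  have "((\<lambda>N. C * (ln (real N) / real N powr a) + D * (ln (real N) / real N powr b)
          + E * (ln (real N) / real N powr d)) \<longlongrightarrow> C * 0 + D * 0 + E * 0) sequentially"
    using assms by (intro tendsto_intros ln_powr)
  then show ?thesis
    by (simp add: ring_distribs mult_ac)
qed

lemma (in prob_space) integral_le_off_event:
  assumes "E \<in> events" "0 \<le> b"
    and "\<And>\<omega>. \<omega> \<in> space M \<Longrightarrow> p \<omega> \<le> 1"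
    and "\<And>\<omega>. \<omega> \<in> space M \<Longrightarrow> \<omega> \<notin> E \<Longrightarrow> p \<omega> \<le> b"
  shows "(\<integral>\<omega>. p \<omega> \<partial>M) \<le> b + prob E"
proof (cases "integrable M p")
  case True
  have indicator: "integrable M (indicator E :: 'a \<Rightarrow> real)"
    using assms(1) by (intro integrable_real_indicator) (auto simp: emeasure_eq_measure)
  then have "(\<integral>\<omega>. p \<omega> \<partial>M) \<le> (\<integral>\<omega>. b + indicator E \<omega> \<partial>M)"
  proof (intro integral_mono True Bochner_Integration.integrable_add integrable_const)
    fix \<omega> assume "\<omega> \<in> space M"
    then show "p \<omega> \<le> b + indicator E \<omega>"
      using assms(2) assms(3,4)[of \<omega>] by (cases "\<omega> \<in> E") auto
  qed
  also have "\<dots> = b + prob E"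
    using indicator assms(1) by (simp add: Bochner_Integration.integral_add prob_space)
  finally show ?thesis .
qed (use assms in \<open>simp add: not_integrable_integral_eq\<close>)

section \<open>The estimate for fixed weights\<close>

lemma not_B_event_le_sum_list:
  assumes "length I = N" "\<not> B_event \<beta> chi \<epsilon> N a I"
  shows "real N powr (-\<epsilon> * \<beta> / 2)
           \<le> sum_list (map (\<lambda>i. if real N powr (chi + \<epsilon>) < real i then max 0 (a i) else 0) I)"
proof -
  have "real N powr (-\<epsilon> * \<beta> / 2)
      \<le> (\<Sum>k<N. a (I ! k) * (if real (I ! k) > real N powr (chi + \<epsilon>) then 1 else 0))"
    using assms(2) by (simp add: B_event_def not_less)
  also have "\<dots> \<le> (\<Sum>k<N. if real N powr (chi + \<epsilon>) < real (I ! k) then max 0 (a (I ! k)) else 0)"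
    by (intro sum_mono) auto
  finally show ?thesis
    using assms(1) by (simp add: sum_list_sum_nth atLeast0LessThan)
qed

definition good_weights :: "nat \<Rightarrow> real \<Rightarrow> (nat \<Rightarrow> real) \<Rightarrow> bool" where
  "good_weights n K v \<longleftrightarrow>
     2 / real n \<le> v (n div 4) \<and> (\<forall>k\<in>{k. 2^k \<le> n \<and> K < 2^(k+1)}. v (2^k) < 2 / 2^k)"

lemma prob_not_B_event_le:
  fixes v :: "nat \<Rightarrow> real" and N n :: nat and \<beta> chi \<epsilon> :: real
  defines "K \<equiv> real N powr (chi + \<epsilon>)"
  assumes pos: "\<And>i. 1 \<le> i \<Longrightarrow> 0 < v i"
    and antimono: "\<And>i j. 1 \<le> i \<Longrightarrow> i \<le> j \<Longrightarrow> v j \<le> v i"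
    and good: "good_weights n K v"
    and "0 < \<beta>" "1 \<le> N" "8 * N + 6 \<le> n" "2 \<le> K"
  shows "measure_pmf.prob (sample_wor (\<lambda>i. v i powr \<beta>) {1..n} N) {I. \<not> B_event \<beta> chi \<epsilon> N v I}
           \<le> 8 * 4 powr (1 + \<beta>) / \<beta> * real N * K powr (-\<beta>) / real n powr (1 - \<beta>)
               / real N powr (-\<epsilon> * \<beta> / 2)"
proof -
  define f where "f i = v i powr \<beta>" for i
  define g where "g i = (if K < real i then max 0 (v i) else 0)" for i
  define c where "c = real N powr (-\<epsilon> * \<beta> / 2)"
  define R where "R = 2 powr \<beta> * real n powr (1 - \<beta>) / 8"
  have n_pos: "0 < real n" and c_pos: "0 < c" and R_pos: "0 < R"
    using assms(6,7) by (auto simp: c_def R_def)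
  have tail: "(\<Sum>i\<in>{1..n}. g i * f i) \<le> 2 powr \<beta> * 4 powr (1 + \<beta>) * K powr (-\<beta>) / \<beta>"
  proof -
    have "(\<Sum>i\<in>{1..n}. g i * f i) = (\<Sum>i=1..n. if K < real i then v i powr (1 + \<beta>) else 0)"
      using pos by (intro sum.cong) (auto simp: g_def f_def powr_add less_imp_le)
    also have "\<dots> \<le> 2 powr \<beta> * 4 powr (1 + \<beta>) * K powr (-\<beta>) / \<beta>"
    proof (rule sum_tail_powr_le[OF assms(5,8)])
      fix i assume "K < real i" "i \<le> n"
      then show "0 < v i \<and> v i < 4 / real i"
        using good pos assms(8) by (auto simp: good_weights_def intro!: dyadic_decay[OF antimono])
    qed
    finally show ?thesis .
  qed
  have "measure_pmf.prob (sample_wor f {1..n} N) {I. \<not> B_event \<beta> chi \<epsilon> N v I}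
      \<le> measure_pmf.prob (sample_wor f {1..n} N) {I. c \<le> sum_list (map g I)}"
    using not_B_event_le_sum_list[of _ N \<beta> chi \<epsilon> v] length_sample_wor
    by (intro measure_pmf.finite_measure_mono_AE AE_pmfI) (auto simp: c_def g_def[abs_def] K_def)
  also have "\<dots> \<le> real N * (\<Sum>i\<in>{1..n}. g i * f i) / R / c"
    using R_pos c_pos good assms(5,7) unfolding R_def f_def
    by (intro prob_sample_wor_sum_list_ge_le sum_powr_ge_after_removal[OF antimono])
      (auto simp: g_def good_weights_def)
  also have "\<dots> \<le> real N * (2 powr \<beta> * 4 powr (1 + \<beta>) * K powr (-\<beta>) / \<beta>) / R / c"
    using tail R_pos c_pos by (intro divide_right_mono mult_left_mono) auto
  also have "\<dots> = 8 * 4 powr (1 + \<beta>) / \<beta> * real N * K powr (-\<beta>) / real n powr (1 - \<beta>) / c"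
    unfolding R_def using n_pos by (simp add: field_simps)
  finally show ?thesis
    by (simp add: f_def[abs_def] c_def)
qed

section \<open>Poisson counts\<close>

lemma poisson_central_moment_2_sums:
  fixes \<mu> :: real
  shows "(\<lambda>n. (real n - \<mu>)^2 * (\<mu>^n / fact n * exp (-\<mu>))) sums \<mu>"
proof -
  define e where "e n = \<mu>^n / fact n" for n
  have e: "e sums exp \<mu>"
    using exp_converges[of \<mu>] by (simp add: e_def[abs_def] divide_inverse mult.commute)
  have shift: "real (Suc n) * e (Suc n) = \<mu> * e n" for n
    by (simp add: e_def fact_Suc del: of_nat_Suc)
  have "(\<lambda>n. real (Suc n) * e (Suc n)) sums (\<mu> * exp \<mu>)"
    using sums_mult[OF e, of \<mu>] by (simp add: shift del: of_nat_Suc)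
  then have e1: "(\<lambda>n. real n * e n) sums (\<mu> * exp \<mu>)"
    by (subst (asm) sums_Suc_iff) simp
  have shift2: "real (Suc n) * (real (Suc n) - 1) * e (Suc n) = \<mu> * (real n * e n)" for n
  proof -
    have "real (Suc n) * (real (Suc n) - 1) * e (Suc n) = real n * (real (Suc n) * e (Suc n))"
      by (simp add: algebra_simps)
    then show ?thesis unfolding shift by simp
  qed
  have "(\<lambda>n. real (Suc n) * (real (Suc n) - 1) * e (Suc n)) sums (\<mu>^2 * exp \<mu>)"
    unfolding shift2 using sums_mult[OF e1, of \<mu>] by (simp add: power2_eq_square mult.assoc)
  then have e2: "(\<lambda>n. real n * (real n - 1) * e n) sums (\<mu>^2 * exp \<mu>)"
    by (subst (asm) sums_Suc_iff) simp
  have "(\<lambda>n. (real n * (real n - 1) * e n + real n * e n - 2 * \<mu> * (real n * e n) + \<mu>^2 * e n)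
           * exp (-\<mu>))
      sums ((\<mu>^2 * exp \<mu> + \<mu> * exp \<mu> - 2 * \<mu> * (\<mu> * exp \<mu>) + \<mu>^2 * exp \<mu>) * exp (-\<mu>))"
    by (intro sums_mult2 sums_add sums_diff sums_mult e e1 e2)
  moreover have "(\<mu>^2 * exp \<mu> + \<mu> * exp \<mu> - 2 * \<mu> * (\<mu> * exp \<mu>) + \<mu>^2 * exp \<mu>) * exp (-\<mu>) = \<mu>"
    by (simp add: algebra_simps power2_eq_square flip: exp_add)
  moreover have "(\<lambda>n. (real n * (real n - 1) * e n + real n * e n - 2 * \<mu> * (real n * e n) + \<mu>^2 * e n)
           * exp (-\<mu>))
      = (\<lambda>n. (real n - \<mu>)^2 * (\<mu>^n / fact n * exp (-\<mu>)))"
    by (auto simp: fun_eq_iff e_def algebra_simps power2_eq_square add_divide_distrib)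
  ultimately show ?thesis by simp
qed

locale poisson_count = prob_space M for M :: "'a measure" +
  fixes X :: "'a \<Rightarrow> nat" and \<mu> :: real
  assumes mean_pos: "0 < \<mu>"
    and prob_eq: "\<And>n. prob {\<omega> \<in> space M. X \<omega> = n} = \<mu>^n / fact n * exp (-\<mu>)"
begin

text \<open>Each level set has positive probability, so it is measurable: non-measurable sets
  have measure 0 by convention.\<close>
lemma measurable_X[measurable]: "X \<in> M \<rightarrow>\<^sub>M count_space UNIV"
proof -
  have "{\<omega> \<in> space M. X \<omega> = n} \<in> events" for n
  proof (rule ccontr)
    assume "{\<omega> \<in> space M. X \<omega> = n} \<notin> events"
    then have "prob {\<omega> \<in> space M. X \<omega> = n} = 0" by (rule measure_notin_sets)
    then show False using prob_eq[of n] mean_pos by simp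
  qed
  then show ?thesis
    by (auto simp: measurable_count_space_eq2_countable vimage_def Int_def conj_commute)
qed

lemma prob_in_sums:
  "(\<lambda>n. if n \<in> S then \<mu>^n / fact n * exp (-\<mu>) else 0) sums prob {\<omega> \<in> space M. X \<omega> \<in> S}"
proof -
  define A where "A n = {\<omega> \<in> space M. X \<omega> = n \<and> n \<in> S}" for n
  have "(\<lambda>n. prob (A n)) sums prob (\<Union>n. A n)"
    by (rule finite_measure_UNION) (auto simp: A_def disjoint_family_on_def)
  moreover have "(\<Union>n. A n) = {\<omega> \<in> space M. X \<omega> \<in> S}"
    by (auto simp: A_def)
  moreover have "prob (A n) = (if n \<in> S then \<mu>^n / fact n * exp (-\<mu>) else 0)" for n
    by (simp add: A_def prob_eq)
  ultimately show ?thesis by simp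
qed

lemma chebyshev:
  assumes "0 < \<delta>"
  shows "prob {\<omega> \<in> space M. \<delta> \<le> \<bar>real (X \<omega>) - \<mu>\<bar>} \<le> \<mu> / \<delta>^2"
proof -
  define S where "S = {n. \<delta> \<le> \<bar>real n - \<mu>\<bar>}"
  have "prob {\<omega> \<in> space M. X \<omega> \<in> S} \<le> \<mu> / \<delta>^2"
  proof (rule sums_le[OF _ prob_in_sums sums_divide[OF poisson_central_moment_2_sums]])
    fix n
    show "(if n \<in> S then \<mu>^n / fact n * exp (-\<mu>) else 0)
        \<le> (real n - \<mu>)^2 * (\<mu>^n / fact n * exp (-\<mu>)) / \<delta>^2"
    proof (cases "n \<in> S")
      case True
      then have "\<delta>^2 \<le> (real n - \<mu>)^2"
        using assms abs_le_square_iff[of \<delta> "real n - \<mu>"] by (simp add: S_def)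
      then show ?thesis
        using True assms mean_pos by (simp add: field_simps mult_right_mono)
    qed (use mean_pos in simp)
  qed
  then show ?thesis by (simp add: S_def)
qed

end

section \<open>Atoms of the Poisson point process\<close>

lemma ppp_intensity_atLeast:
  assumes "0 < x"
  shows "ppp_intensity {x..} = ennreal (1 / x)"
proof -
  have "(\<integral>\<^sup>+t. ennreal (1 / t\<^sup>2) * indicator {x..} t \<partial>lborel) = ennreal (0 - (- 1 / x))"
  proof (rule nn_integral_FTC_atLeast)
    fix t assume "x \<le> t"
    then show "((\<lambda>t. - 1 / t) has_real_derivative 1 / t\<^sup>2) (at t)"
      using assms by (auto intro!: derivative_eq_intros simp: power2_eq_square)
  next
    show "((\<lambda>t::real. - 1 / t) \<longlongrightarrow> 0) at_top" by real_asymp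
  qed auto
  then show ?thesis by (simp add: ppp_intensity_def)
qed

context
  fixes M :: "'a measure" and w :: "'a \<Rightarrow> nat \<Rightarrow> real"
  assumes ppp: "is_ppp_atoms M w"
begin

lemma ppp_prob_space: "prob_space M"
  using ppp by (simp add: is_ppp_atoms_def)

lemma ppp_measurable[measurable]: "(\<lambda>\<omega>. w \<omega> i) \<in> borel_measurable M"
  using ppp by (simp add: is_ppp_atoms_def)

lemma ppp_pos: "\<omega> \<in> space M \<Longrightarrow> 1 \<le> i \<Longrightarrow> 0 < w \<omega> i"
  using ppp by (simp add: is_ppp_atoms_def)

lemma ppp_antimono:
  assumes "\<omega> \<in> space M" "1 \<le> i" "i \<le> j"
  shows "w \<omega> j \<le> w \<omega> i"
  using assms(3)
proof (induction j rule: dec_induct)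
  case (step j)
  have "w \<omega> (Suc j) < w \<omega> j"
    using ppp assms(1) assms(2) step.hyps(1) by (simp add: is_ppp_atoms_def)
  then show ?case using step.IH by simp
qed simp

lemma ppp_count_atLeast:
  assumes "0 < x"
  shows "poisson_count M (\<lambda>\<omega>. atom_count (w \<omega>) {x..}) (1 / x)"
    and "AE \<omega> in M. finite {i. 1 \<le> i \<and> w \<omega> i \<in> {x..}}"
proof -
  have intensity: "ppp_intensity {x..} = ennreal (1 / x)"
    using ppp_intensity_atLeast[OF assms] .
  have "(\<forall>j<1. {x..} \<in> sets borel \<and> {x..} \<subseteq> {0<..} \<and> ppp_intensity {x..} < \<infinity>)
        \<and> disjoint_family_on (\<lambda>_::nat. {x..}) {..<1}"
    using assms intensity by (auto simp: disjoint_family_on_def)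
  note law = ppp[unfolded is_ppp_atoms_def, THEN conjunct2, THEN conjunct2, THEN conjunct2,
      rule_format, of 1 "\<lambda>_. {x..}", OF this]
  show "AE \<omega> in M. finite {i. 1 \<le> i \<and> w \<omega> i \<in> {x..}}"
    using law by simp
  interpret prob_space M by (rule ppp_prob_space)
  show "poisson_count M (\<lambda>\<omega>. atom_count (w \<omega>) {x..}) (1 / x)"
    using law assms intensity by unfold_locales (auto simp: Let_def)
qed

lemma prob_ppp_atom_less:
  assumes "0 < x" "1 \<le> m" "real m < 1 / x"
  shows "measure M {\<omega> \<in> space M. w \<omega> m < x} \<le> (1 / x) / (1 / x - real m)^2"
proof -
  interpret P: poisson_count M "\<lambda>\<omega>. atom_count (w \<omega>) {x..}" "1 / x"
    by (rule ppp_count_atLeast(1)[OF assms(1)])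
  have "measure M {\<omega> \<in> space M. w \<omega> m < x}
      \<le> measure M {\<omega> \<in> space M. 1 / x - real m \<le> \<bar>real (atom_count (w \<omega>) {x..}) - 1 / x\<bar>}"
  proof (rule P.finite_measure_mono, safe)
    fix \<omega> assume \<omega>: "\<omega> \<in> space M" "w \<omega> m < x"
    have "{i. 1 \<le> i \<and> w \<omega> i \<in> {x..}} \<subseteq> {1..m - 1}"
    proof
      fix i assume i: "i \<in> {i. 1 \<le> i \<and> w \<omega> i \<in> {x..}}"
      have "\<not> m \<le> i"
        using i \<omega>(2) ppp_antimono[OF \<omega>(1) assms(2), of i] by auto
      then show "i \<in> {1..m - 1}" using i by auto
    qed
    then have "atom_count (w \<omega>) {x..} \<le> m - 1"
      unfolding atom_count_def by (metis card_atLeastAtMost card_mono diff_Suc_1 finite_atLeastAtMost)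
    then show "1 / x - real m \<le> \<bar>real (atom_count (w \<omega>) {x..}) - 1 / x\<bar>"
      using assms(2,3) by linarith
  qed measurable
  also have "\<dots> \<le> (1 / x) / (1 / x - real m)^2"
    using assms by (intro P.chebyshev) simp
  finally show ?thesis .
qed

lemma prob_ppp_atom_ge:
  assumes "0 < t" "1 \<le> i" "1 / t < real i"
  shows "measure M {\<omega> \<in> space M. t \<le> w \<omega> i} \<le> (1 / t) / (real i - 1 / t)^2"
proof -
  interpret P: poisson_count M "\<lambda>\<omega>. atom_count (w \<omega>) {t..}" "1 / t"
    by (rule ppp_count_atLeast(1)[OF assms(1)])
  have "emeasure M {\<omega> \<in> space M. t \<le> w \<omega> i}
      \<le> emeasure M {\<omega> \<in> space M. real i - 1 / t \<le> \<bar>real (atom_count (w \<omega>) {t..}) - 1 / t\<bar>}"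
  proof (rule emeasure_mono_AE)
    show "AE \<omega> in M. \<omega> \<in> {\<omega> \<in> space M. t \<le> w \<omega> i} \<longrightarrow>
        \<omega> \<in> {\<omega> \<in> space M. real i - 1 / t \<le> \<bar>real (atom_count (w \<omega>) {t..}) - 1 / t\<bar>}"
      using ppp_count_atLeast(2)[OF assms(1)]
    proof eventually_elim
      case (elim \<omega>)
      show ?case
      proof safe
        assume \<omega>: "\<omega> \<in> space M" "t \<le> w \<omega> i"
        have "{1..i} \<subseteq> {j. 1 \<le> j \<and> w \<omega> j \<in> {t..}}"
        proof
          fix j assume "j \<in> {1..i}"
          then show "j \<in> {j. 1 \<le> j \<and> w \<omega> j \<in> {t..}}"
            using ppp_antimono[OF \<omega>(1), of j i] \<omega>(2) by auto
        qed
        then have "i \<le> atom_count (w \<omega>) {t..}"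
          unfolding atom_count_def using card_mono[OF elim] by (metis card_atLeastAtMost diff_Suc_1)
        then show "real i - 1 / t \<le> \<bar>real (atom_count (w \<omega>) {t..}) - 1 / t\<bar>"
          using assms(3) by linarith
      qed
    qed
  qed measurable
  also have "\<dots> \<le> ennreal ((1 / t) / (real i - 1 / t)^2)"
    using assms P.chebyshev[of "real i - 1 / t"] by (simp add: P.emeasure_eq_measure del: divide_divide_eq_left)
  finally show ?thesis
    using assms by (simp add: P.emeasure_eq_measure ennreal_le_iff del: divide_divide_eq_left)
qed

lemma prob_not_good_weights_le:
  assumes "4 \<le> n" "0 < K"
  shows "{\<omega> \<in> space M. \<not> good_weights n K (w \<omega>)} \<in> sets M"
    and "measure M {\<omega> \<in> space M. \<not> good_weights n K (w \<omega>)} \<le> 8 / real n + 8 / K"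
proof -
  define m where "m = n div 4"
  define D where "D = {k. 2^k \<le> n \<and> K < 2^(k+1)}"
  have fin: "finite D"
    by (rule finite_subset[of _ "{..n}"]) (auto simp: D_def dest: order.strict_trans2[OF less_exp])
  have eq: "{\<omega> \<in> space M. \<not> good_weights n K (w \<omega>)}
      = {\<omega> \<in> space M. w \<omega> m < 2 / real n} \<union> (\<Union>k\<in>D. {\<omega> \<in> space M. 2 / 2^k \<le> w \<omega> (2^k)})"
    by (auto simp: good_weights_def D_def m_def not_le)
  show "{\<omega> \<in> space M. \<not> good_weights n K (w \<omega>)} \<in> sets M"
    unfolding eq using fin by (intro sets.Un sets.finite_UN) (measurable; rule ppp)+
  have "measure M {\<omega> \<in> space M. \<not> good_weights n K (w \<omega>)}
      \<le> measure M {\<omega> \<in> space M. w \<omega> m < 2 / real n}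
         + (\<Sum>k\<in>D. measure M {\<omega> \<in> space M. 2 / 2^k \<le> w \<omega> (2^k)})"
    unfolding eq using fin
    by (intro order.trans[OF measure_Un_le] add_left_mono measure_UNION_le sets.finite_UN)
      (measurable; rule ppp)+
  also have "measure M {\<omega> \<in> space M. w \<omega> m < 2 / real n} \<le> 8 / real n"
  proof -
    have m: "1 \<le> m" "real n / 4 \<le> real n / 2 - real m"
      using assms(1) by (auto simp: m_def)
    have "measure M {\<omega> \<in> space M. w \<omega> m < 2 / real n} \<le> (real n / 2) / (real n / 2 - real m)^2"
      using prob_ppp_atom_less[of "2 / real n" m] m assms(1) by simp
    also have "\<dots> \<le> (real n / 2) / (real n / 4)^2"
      using m assms(1) by (intro divide_left_mono power_mono) auto
    also have "\<dots> = 8 / real n"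
      by (simp add: power2_eq_square)
    finally show ?thesis .
  qed
  also have "(\<Sum>k\<in>D. measure M {\<omega> \<in> space M. 2 / 2^k \<le> w \<omega> (2^k)}) \<le> (\<Sum>k\<in>D. 2 / 2^k)"
  proof (rule sum_mono)
    fix k :: nat
    have "measure M {\<omega> \<in> space M. 2 / 2^k \<le> w \<omega> (2^k)} \<le> (2^k / 2) / (2^k - 2^k / 2)^2"
      using prob_ppp_atom_ge[of "2 / 2^k" "2^k"] by simp
    also have "\<dots> = 2 / 2^k"
      by (simp add: field_simps power2_eq_square)
    finally show "measure M {\<omega> \<in> space M. 2 / 2^k \<le> w \<omega> (2^k)} \<le> 2 / 2^k" .
  qed
  also have "\<dots> \<le> 8 / K"
    using fin assms(2) by (intro sum_dyadic_le) (auto simp: D_def)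
  finally show "measure M {\<omega> \<in> space M. \<not> good_weights n K (w \<omega>)} \<le> 8 / real n + 8 / K"
    by simp
qed

lemma integral_prob_not_B_event_le:
  fixes N n :: nat and \<beta> chi \<epsilon> :: real
  defines "K \<equiv> real N powr (chi + \<epsilon>)"
  assumes "0 < \<beta>" "1 \<le> N" "8 * N + 6 \<le> n" "2 \<le> K"
  shows "(\<integral>\<omega>. measure_pmf.prob (sample_wor (\<lambda>i. w \<omega> i powr \<beta>) {1..n} N)
                 {I. \<not> B_event \<beta> chi \<epsilon> N (w \<omega>) I} \<partial>M)
           \<le> 8 * 4 powr (1 + \<beta>) / \<beta> * real N * K powr (-\<beta>) / real n powr (1 - \<beta>)
               / real N powr (-\<epsilon> * \<beta> / 2) + (8 / real n + 8 / K)"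
proof -
  interpret prob_space M by (rule ppp_prob_space)
  have "4 \<le> n" "0 < K" using assms(4,5) by auto
  note not_good = prob_not_good_weights_le[OF this]
  have "(\<integral>\<omega>. measure_pmf.prob (sample_wor (\<lambda>i. w \<omega> i powr \<beta>) {1..n} N)
                 {I. \<not> B_event \<beta> chi \<epsilon> N (w \<omega>) I} \<partial>M)
      \<le> 8 * 4 powr (1 + \<beta>) / \<beta> * real N * K powr (-\<beta>) / real n powr (1 - \<beta>)
               / real N powr (-\<epsilon> * \<beta> / 2) + prob {\<omega> \<in> space M. \<not> good_weights n K (w \<omega>)}"
    using assms unfolding K_def
    by (intro integral_le_off_event not_good(1)[unfolded K_def] prob_not_B_event_le)
      (auto intro: ppp_pos ppp_antimono)
  then show ?thesis
    using not_good(2) by simp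
qed

lemma integral_prob_not_B_event_le_powr:
  fixes N :: nat and \<gamma> \<beta> \<epsilon> :: real
  defines "chi \<equiv> (1 - \<gamma> * (1 - \<beta>)) / \<beta>"
  assumes "0 < \<beta>" "\<beta> < 1" "1 \<le> N" "8 * real N + 6 \<le> real N powr \<gamma>" "2 \<le> real N powr (chi + \<epsilon>)"
  shows "(\<integral>\<omega>. measure_pmf.prob (sample_wor (\<lambda>i. w \<omega> i powr \<beta>) {1..nat \<lceil>real N powr \<gamma>\<rceil>} N)
                 {I. \<not> B_event \<beta> chi \<epsilon> N (w \<omega>) I} \<partial>M)
           \<le> 8 * 4 powr (1 + \<beta>) / \<beta> / real N powr (\<epsilon> * \<beta> / 2)
               + 8 / real N powr \<gamma> + 8 / real N powr (chi + \<epsilon>)"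
proof -
  define n where "n = nat \<lceil>real N powr \<gamma>\<rceil>"
  define K where "K = real N powr (chi + \<epsilon>)"
  have N_pos: "0 < real N" using assms(4) by simp
  have n_ge: "real N powr \<gamma> \<le> real n"
    unfolding n_def by linarith
  then have n_large: "8 * N + 6 \<le> n"
    using assms(5) by linarith
  have n_pos: "0 < real n" and N\<gamma>_pos: "0 < real N powr \<gamma>"
    using n_large N_pos by auto
  have "real N * K powr (-\<beta>) / real n powr (1 - \<beta>) / real N powr (-\<epsilon> * \<beta> / 2)
      \<le> real N * K powr (-\<beta>) / (real N powr \<gamma>) powr (1 - \<beta>) / real N powr (-\<epsilon> * \<beta> / 2)"
  proof (intro divide_right_mono divide_left_mono mult_pos_pos)
    show "(real N powr \<gamma>) powr (1 - \<beta>) \<le> real n powr (1 - \<beta>)"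
      using assms(3) n_ge N\<gamma>_pos by (intro powr_mono2) auto
  qed (use N_pos n_pos N\<gamma>_pos in auto)
  also have "\<dots> = real N powr 1 * real N powr ((chi + \<epsilon>) * -\<beta>) / real N powr (\<gamma> * (1 - \<beta>))
      / real N powr (-\<epsilon> * \<beta> / 2)"
    unfolding K_def powr_powr using N_pos by simp
  also have "\<dots> = real N powr (1 + (chi + \<epsilon>) * -\<beta> - \<gamma> * (1 - \<beta>) - -\<epsilon> * \<beta> / 2)"
    by (simp only: powr_add powr_diff)
  also have "1 + (chi + \<epsilon>) * -\<beta> - \<gamma> * (1 - \<beta>) - -\<epsilon> * \<beta> / 2 = -(\<epsilon> * \<beta> / 2)"
    using assms(2) by (simp add: chi_def field_simps)
  finally have "real N * K powr (-\<beta>) / real n powr (1 - \<beta>) / real N powr (-\<epsilon> * \<beta> / 2)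
      \<le> 1 / real N powr (\<epsilon> * \<beta> / 2)"
    by (simp add: powr_minus_divide)
  then have "8 * 4 powr (1 + \<beta>) / \<beta>
        * (real N * K powr (-\<beta>) / real n powr (1 - \<beta>) / real N powr (-\<epsilon> * \<beta> / 2))
      \<le> 8 * 4 powr (1 + \<beta>) / \<beta> * (1 / real N powr (\<epsilon> * \<beta> / 2))"
    using assms(2) by (intro mult_left_mono) auto
  then have "8 * 4 powr (1 + \<beta>) / \<beta> * real N * K powr (-\<beta>) / real n powr (1 - \<beta>)
      / real N powr (-\<epsilon> * \<beta> / 2) \<le> 8 * 4 powr (1 + \<beta>) / \<beta> / real N powr (\<epsilon> * \<beta> / 2)"
    by (simp add: mult.assoc)
  moreover have "8 / real n \<le> 8 / real N powr \<gamma>"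
    using n_ge N\<gamma>_pos by (simp add: frac_le)
  ultimately show ?thesis
    using integral_prob_not_B_event_le[OF assms(2,4) n_large assms(6), folded n_def K_def]
    by (simp add: K_def n_def)
qed

lemma eventually_integral_prob_not_B_event_le:
  fixes \<gamma> \<beta> \<epsilon> :: real
  defines "chi \<equiv> (1 - \<gamma> * (1 - \<beta>)) / \<beta>"
  assumes "1 < \<gamma>" "0 < \<beta>" "\<beta> < 1" "0 < chi + \<epsilon>"
  shows "\<forall>\<^sub>F N in sequentially.
           (\<integral>\<omega>. measure_pmf.prob (sample_wor (\<lambda>i. w \<omega> i powr \<beta>) {1..nat \<lceil>real N powr \<gamma>\<rceil>} N)
                 {I. \<not> B_event \<beta> chi \<epsilon> N (w \<omega>) I} \<partial>M)
           \<le> 8 * 4 powr (1 + \<beta>) / \<beta> / real N powr (\<epsilon> * \<beta> / 2)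
               + 8 / real N powr \<gamma> + 8 / real N powr (chi + \<epsilon>)"
proof -
  have "\<forall>\<^sub>F N in sequentially. 1 \<le> N \<and> 8 * real N + 6 \<le> real N powr \<gamma> \<and> 2 \<le> real N powr (chi + \<epsilon>)"
    using assms(2,5) by (intro eventually_conj; real_asymp)
  then show ?thesis
  proof eventually_elim
    case (elim N)
    then show ?case
      unfolding chi_def using assms(3,4) by (intro integral_prob_not_B_event_le_powr) auto
  qed
qed

end

theorem proposition6p3:
  fixes M :: "'a measure" and w :: "'a \<Rightarrow> nat \<Rightarrow> real"
    and \<gamma> \<beta> \<epsilon> :: real
  assumes "\<gamma> > 1" and "0 < \<beta>" and "\<beta> < 1"
    and "1 - 1 / \<gamma> < \<beta>"
    and "0 < \<epsilon>" and "\<epsilon> < 1"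
    and "is_ppp_atoms M w"
  shows "((\<lambda>N::nat. ln (real N) *
            (\<integral>\<omega>. measure_pmf.prob
                    (sample_wor (\<lambda>i. w \<omega> i powr \<beta>) {1..nat \<lceil>real N powr \<gamma>\<rceil>} N)
                    {I. \<not> B_event \<beta> ((1 - \<gamma> * (1 - \<beta>)) / \<beta>) \<epsilon> N (w \<omega>) I} \<partial>M))
          \<longlongrightarrow> 0) sequentially"
proof -
  define chi where "chi = (1 - \<gamma> * (1 - \<beta>)) / \<beta>"
  define Q where "Q N = (\<integral>\<omega>. measure_pmf.prob
      (sample_wor (\<lambda>i. w \<omega> i powr \<beta>) {1..nat \<lceil>real N powr \<gamma>\<rceil>} N)
      {I. \<not> B_event \<beta> chi \<epsilon> N (w \<omega>) I} \<partial>M)" for N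
  have "\<gamma> * (1 - \<beta>) < 1"
    using assms(1,4) by (simp add: field_simps)
  then have chi_pos: "0 < chi + \<epsilon>"
    using assms(2,5) by (simp add: chi_def add_pos_pos)
  have "((\<lambda>N. ln (real N) * Q N) \<longlongrightarrow> 0) sequentially"
  proof (rule tendsto_sandwich[OF _ _ tendsto_const tendsto_ln_mult_sum_powr])
    show "\<forall>\<^sub>F N in sequentially. 0 \<le> ln (real N) * Q N"
      using eventually_ge_at_top[of "1::nat"] by eventually_elim (simp add: Q_def)
    show "\<forall>\<^sub>F N in sequentially. ln (real N) * Q N \<le> ln (real N) * (8 * 4 powr (1 + \<beta>) / \<beta>
        / real N powr (\<epsilon> * \<beta> / 2) + 8 / real N powr \<gamma> + 8 / real N powr (chi + \<epsilon>))"
      using eventually_ge_at_top[of "1::nat"]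
        eventually_integral_prob_not_B_event_le[OF assms(7,1-3) chi_pos[unfolded chi_def]]
      unfolding Q_def chi_def by eventually_elim (simp add: mult_left_mono)
  qed (use assms chi_pos in auto)
  then show ?thesis
    by (simp add: Q_def chi_def)
qed

end
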